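(* Let $X,Y$ be Hilbert spaces, $A:X\to Y$ a bounded linear operator, $x^\dagger,x^*\in X$ and $y\in Y$. Let $\lambda>0$ with $\lambda\in\sigma(AA^* )$ and set $\delta:=\lambda$. Then there exists $y^\delta\in Y$ with $\|y^\delta-y\|=\delta$ such that for every $\alpha>0$, $$\|\hat x_\alpha^\delta-x^\dagger\|^2\ \ge\ \frac{\delta}{2(\alpha/\delta+3/2)^2},$$ where $\hat x_\alpha^\delta:=x^\dagger+(\alpha I+A^*A)^{-1}\big(\alpha(x^*-x^\dagger)+A^*(y^\delta-y)\big)$.
   Context: $\sigma(AA^* )$ denotes the spectrum of the self-adjoint operator $AA^*$. The element $\hat x_\alpha^\delta$ is the unique minimizer of $\|Ax-(Ax^\dagger+y^\delta-y)\|^2+\alpha\|x-x^*\|^2$ over $X$. *)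

theory Defs
  imports "HOL-Analysis.Analysis"
begin

definition op_spectrum :: "('b::{real_inner,complete_space} \<Rightarrow> 'b) \<Rightarrow> real set" where
  "op_spectrum T = {mu. \<not> (\<exists>S. bounded_linear S \<and>
       (\<forall>x. S (mu *\<^sub>R x - T x) = x) \<and> (\<forall>x. mu *\<^sub>R S x - T (S x) = x))}"

definition xhat :: "('a::{real_inner,complete_space} \<Rightarrow> 'b::{real_inner,complete_space})
     \<Rightarrow> real \<Rightarrow> 'a \<Rightarrow> 'a \<Rightarrow> 'b \<Rightarrow> 'b \<Rightarrow> 'a" where
  "xhat A alpha xdag xstar y ydelta =
     xdag + inv (\<lambda>x. alpha *\<^sub>R x + adjoint A (A x))
              (alpha *\<^sub>R (xstar - xdag) + adjoint A (ydelta - y))"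

end

theory Submission
  imports Defs
begin

text \<open>Since \<open>A A\<^sup>*\<close> is self-adjoint, \<open>\<lambda>\<close> in its spectrum has unit approximate eigenvectors \<open>w\<close>,
  \<open>\<parallel>A A\<^sup>* w - \<lambda> w\<parallel> \<le> \<epsilon>\<close>, and the sign of \<open>w\<close> may be chosen so that
  \<open>\<langle>x\<^sup>* - x\<^sup>\<dagger>, A\<^sup>* w\<rangle> \<ge> 0\<close>. Take \<open>y\<^sup>\<delta> = y + \<lambda> w\<close>. The error \<open>u = x\<^sub>\<alpha>\<^sup>\<delta> - x\<^sup>\<dagger>\<close> solves the
  normal equation \<open>\<alpha> u + A\<^sup>* A u = \<alpha> (x\<^sup>* - x\<^sup>\<dagger>) + \<lambda> A\<^sup>* w\<close>; pairing it with \<open>A\<^sup>* w\<close> gives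
  \<open>\<lambda> \<parallel>A\<^sup>* w\<parallel> \<le> \<parallel>u\<parallel> (\<alpha> + 3\<lambda>/2)\<close> for small \<open>\<epsilon>\<close>, while \<open>\<parallel>A\<^sup>* w\<parallel>\<^sup>2 \<ge> \<lambda>/2\<close>.

  The Hilbert space facts needed for general (infinite-dimensional) spaces -- Riesz representation,
  bounded adjoints, invertibility of coercive symmetric operators -- all come from minimising the
  energy \<open>\<langle>S x, x\<rangle>/2 - g x\<close>, whose minimising sequences are Cauchy by the parallelogram law.\<close>

definition energy :: "('a::real_inner \<Rightarrow> 'a) \<Rightarrow> ('a \<Rightarrow> real) \<Rightarrow> 'a \<Rightarrow> real" where
  "energy S g x = (S x \<bullet> x) / 2 - g x"

context
  fixes S :: "'a::{real_inner,complete_space} \<Rightarrow> 'a" and g :: "'a \<Rightarrow> real" and c :: real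
  assumes S: "bounded_linear S" and S_sym: "\<And>x y. S x \<bullet> y = x \<bullet> S y"
    and c: "c > 0" and coercive: "\<And>x. c * (norm x)\<^sup>2 \<le> S x \<bullet> x"
    and g: "bounded_linear g"
begin

lemma energy_bounded_below: "bdd_below (range (energy S g))"
proof -
  interpret g: bounded_linear g by (fact g)
  obtain K where K: "\<And>x. norm (g x) \<le> norm x * K" using g.bounded by blast
  have "- (K\<^sup>2 / (2 * c)) \<le> energy S g x" for x
  proof -
    have "0 \<le> (c * norm x - K)\<^sup>2" by simp
    then have "- (K\<^sup>2 / (2 * c)) \<le> c * (norm x)\<^sup>2 / 2 - K * norm x"
      using c by (simp add: field_simps power2_eq_square)
    moreover have "g x \<le> norm x * K" using K[of x] by auto
    ultimately show ?thesis using coercive[of x] unfolding energy_def by (simp add: algebra_simps)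
  qed
  then show ?thesis by (rule bdd_belowI2)
qed

lemma energy_midpoint:
  "c / 4 * (norm (x - y))\<^sup>2 \<le> energy S g x + energy S g y - 2 * energy S g ((1/2) *\<^sub>R (x + y))"
proof -
  interpret S: bounded_linear S by (fact S)
  interpret g: bounded_linear g by (fact g)
  have "energy S g x + energy S g y - 2 * energy S g ((1/2) *\<^sub>R (x + y)) = S (x - y) \<bullet> (x - y) / 4"
    unfolding energy_def
    by (simp add: S.diff S.add S.scaleR g.add g.scaleR inner_diff_left inner_diff_right
        inner_add_left inner_add_right S_sym[of y x] algebra_simps)
  then show ?thesis using coercive[of "x - y"] by simp
qed

lemma energy_minimizing_sequence_Cauchy:
  assumes m_le: "\<And>x. m \<le> energy S g x"
    and a: "\<And>n. energy S g (a n) < m + 1 / real (Suc n)"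
  shows "Cauchy a"
proof (rule metric_CauchyI)
  fix e :: real assume e: "e > 0"
  obtain N where N: "inverse (real (Suc N)) < c * e\<^sup>2 / 8"
    using reals_Archimedean c e by (metis divide_pos_pos zero_less_numeral zero_less_power mult_pos_pos)
  have "dist (a n) (a k) < e" if "N \<le> n" "N \<le> k" for n k
  proof -
    have "1 / real (Suc n) \<le> inverse (real (Suc N))" "1 / real (Suc k) \<le> inverse (real (Suc N))"
      using that by (simp_all add: field_simps)
    then have "c / 4 * (norm (a n - a k))\<^sup>2 < c / 4 * e\<^sup>2"
      using energy_midpoint[of "a n" "a k"] a[of n] a[of k] m_le[of "(1/2) *\<^sub>R (a n + a k)"] N
      by linarith
    then have "(norm (a n - a k))\<^sup>2 < e\<^sup>2" using c by simp
    then show ?thesis using e by (simp add: dist_norm power_less_imp_less_base)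
  qed
  then show "\<exists>M. \<forall>m\<ge>M. \<forall>n\<ge>M. dist (a m) (a n) < e" by blast
qed

lemma energy_has_minimizer: "\<exists>z. \<forall>x. energy S g z \<le> energy S g x"
proof -
  define J where "J = energy S g"
  define m where "m = Inf (range J)"
  have m_le: "m \<le> J x" for x
    unfolding m_def J_def using energy_bounded_below by (simp add: cInf_lower)
  have "\<exists>x. J x < m + 1 / real (Suc n)" for n
    using cInf_lessD[of "range J" "m + 1 / real (Suc n)"] unfolding m_def by auto
  then obtain a where a: "\<And>n. J (a n) < m + 1 / real (Suc n)" by metis
  then have "Cauchy a" using energy_minimizing_sequence_Cauchy m_le unfolding J_def by blast
  then obtain z where z: "a \<longlonglongrightarrow> z" using convergent_eq_Cauchy by blast
  have "(\<lambda>n. J (a n)) \<longlonglongrightarrow> J z"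
    unfolding J_def energy_def
    by (intro tendsto_intros bounded_linear.tendsto[OF S] bounded_linear.tendsto[OF g] z) simp_all
  moreover have "(\<lambda>n. J (a n)) \<longlonglongrightarrow> m"
  proof (rule real_tendsto_sandwich[where f="\<lambda>n. m" and h="\<lambda>n. m + 1 / real (Suc n)"])
    show "\<forall>\<^sub>F n in sequentially. m \<le> J (a n)" using m_le by simp
    show "\<forall>\<^sub>F n in sequentially. J (a n) \<le> m + 1 / real (Suc n)" using a by (simp add: less_imp_le)
    show "(\<lambda>n. m + 1 / real (Suc n)) \<longlonglongrightarrow> m"
      using LIMSEQ_inverse_real_of_nat_add[of m] by (simp add: divide_inverse)
  qed simp
  ultimately have "J z = m" using LIMSEQ_unique by blast
  then show ?thesis using m_le unfolding J_def by metis
qed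

lemma energy_minimizer_critical:
  assumes min: "\<And>x. energy S g z \<le> energy S g x"
  shows "S z \<bullet> h = g h"
proof -
  interpret S: bounded_linear S by (fact S)
  interpret g: bounded_linear g by (fact g)
  define p where "p = S z \<bullet> h - g h"
  define Q where "Q = S h \<bullet> h"
  have "Q \<ge> 0" unfolding Q_def using coercive[of h] c by (smt (verit) mult_nonneg_nonneg zero_le_power2)
  have step: "energy S g (z + t *\<^sub>R h) - energy S g z = t * p + t\<^sup>2 * Q / 2" for t
    unfolding energy_def p_def Q_def
    by (simp add: S.add S.scaleR g.add g.scaleR inner_add_left inner_add_right
        S_sym[of h z] inner_commute[of h "S z"] power2_eq_square algebra_simps)
  have nonneg: "0 \<le> t * p + t\<^sup>2 * Q / 2" for t using step[of t] min[of "z + t *\<^sub>R h"] by linarith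
  define s where "s = 1 / (Q + 1)"
  have "s > 0" "s * Q / 2 < 1" using \<open>Q \<ge> 0\<close> unfolding s_def by (simp_all add: field_simps)
  from nonneg[of "- s * p"] have "0 \<le> (s * p\<^sup>2) * (s * Q / 2 - 1)"
    by (simp add: power2_eq_square algebra_simps)
  then have "s * p\<^sup>2 \<le> 0" using \<open>s * Q / 2 < 1\<close> by (smt (verit) mult_pos_neg)
  then have "p\<^sup>2 \<le> 0" using \<open>s > 0\<close> by (simp add: mult_le_0_iff)
  then show ?thesis unfolding p_def by simp
qed

lemma lax_milgram_symmetric: "\<exists>z. \<forall>h. S z \<bullet> h = g h"
  using energy_has_minimizer energy_minimizer_critical by blast

end

lemma riesz_representation:
  fixes g :: "'a::{real_inner,complete_space} \<Rightarrow> real"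
  assumes "bounded_linear g"
  shows "\<exists>z. \<forall>h. g h = z \<bullet> h"
proof -
  have "\<exists>z. \<forall>h. z \<bullet> h = g h"
    using lax_milgram_symmetric[where S="\<lambda>x. x" and c=1, OF bounded_linear_ident _ _ _ assms]
    by (simp add: power2_norm_eq_inner)
  then show ?thesis by metis
qed

lemma hilbert_adjoint_works:
  fixes f :: "'a::{real_inner,complete_space} \<Rightarrow> 'b::real_inner"
  assumes "bounded_linear f"
  shows "x \<bullet> adjoint f y = f x \<bullet> y"
proof -
  have "\<exists>z. \<forall>x. f x \<bullet> y = x \<bullet> z" for y
    using riesz_representation[OF bounded_linear_compose[OF bounded_linear_inner_left assms]]
    by (metis inner_commute)
  then have "\<exists>f'. \<forall>x y. f x \<bullet> y = x \<bullet> f' y" by metis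
  then have "\<forall>x y. f x \<bullet> y = x \<bullet> adjoint f y"
    unfolding adjoint_def by (rule someI_ex)
  then show ?thesis by simp
qed

lemma bounded_linear_hilbert_adjoint:
  fixes f :: "'a::{real_inner,complete_space} \<Rightarrow> 'b::real_inner"
  assumes f: "bounded_linear f"
  shows "bounded_linear (adjoint f)"
proof -
  obtain K where K: "K > 0" "\<And>x. norm (f x) \<le> norm x * K"
    using bounded_linear.pos_bounded[OF f] by blast
  note adj = hilbert_adjoint_works[OF f]
  show ?thesis
  proof (rule bounded_linear_intro[where K=K])
    show "adjoint f (x + y) = adjoint f x + adjoint f y" for x y
      by (rule vector_eq_ldot[THEN iffD1]) (simp add: adj inner_add_right)
    show "adjoint f (r *\<^sub>R x) = r *\<^sub>R adjoint f x" for r x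
      by (rule vector_eq_ldot[THEN iffD1]) (simp add: adj)
    fix y
    have "norm (adjoint f y) * norm (adjoint f y) = f (adjoint f y) \<bullet> y"
      by (simp add: adj[symmetric] power2_norm_eq_inner[symmetric] power2_eq_square)
    also have "\<dots> \<le> norm (f (adjoint f y)) * norm y" by (rule norm_cauchy_schwarz)
    also have "\<dots> \<le> norm (adjoint f y) * (K * norm y)"
      using mult_right_mono[OF K(2) norm_ge_zero[of y]] by (simp add: mult.assoc)
    finally show "norm (adjoint f y) \<le> norm y * K"
      by (cases "adjoint f y = 0") (auto simp: mult.commute K(1) less_imp_le)
  qed
qed

lemma surj_symmetric_coercive:
  fixes S :: "'a::{real_inner,complete_space} \<Rightarrow> 'a"
  assumes "bounded_linear S" "\<And>x y. S x \<bullet> y = x \<bullet> S y"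
    and "c > 0" "\<And>x. c * (norm x)\<^sup>2 \<le> S x \<bullet> x"
  shows "surj S"
proof -
  have "\<exists>z. S z = w" for w
    using lax_milgram_symmetric[OF assms bounded_linear_inner_right[of w]] vector_eq_rdot by blast
  then show ?thesis by (metis surjI)
qed

text \<open>Surjectivity: \<open>L \<circ> L\<close> is coercive with constant \<open>e\<^sup>2\<close>.\<close>
lemma symmetric_bounded_below_invertible:
  fixes L :: "'a::{real_inner,complete_space} \<Rightarrow> 'a"
  assumes L: "bounded_linear L" and L_sym: "\<And>x y. L x \<bullet> y = x \<bullet> L y"
    and e: "e > 0" and below: "\<And>x. e * norm x \<le> norm (L x)"
  shows "\<exists>R. bounded_linear R \<and> (\<forall>x. R (L x) = x) \<and> (\<forall>x. L (R x) = x)"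
proof -
  interpret L: bounded_linear L by (fact L)
  have "surj (\<lambda>x. L (L x))"
  proof (rule surj_symmetric_coercive[where c="e\<^sup>2"])
    show "bounded_linear (\<lambda>x. L (L x))" using bounded_linear_compose[OF L L] .
    show "e\<^sup>2 * (norm x)\<^sup>2 \<le> L (L x) \<bullet> x" for x
    proof -
      have "(e * norm x)\<^sup>2 \<le> (norm (L x))\<^sup>2" using below[of x] e by (intro power_mono) auto
      then show ?thesis using L_sym[of "L x" x] by (simp add: power_mult_distrib power2_norm_eq_inner)
    qed
  qed (use e L_sym in simp_all)
  then have surj: "surj L" unfolding surj_def by (metis (no_types))
  have inj: "inj L"
  proof (rule injI)
    fix x y assume "L x = L y"
    then have "e * norm (x - y) \<le> 0" using below[of "x - y"] by (simp add: L.diff)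
    then show "x = y" using e by (simp add: mult_le_0_iff)
  qed
  define R where "R = inv L"
  have RL: "R (L x) = x" and LR: "L (R x) = x" for x
    unfolding R_def using inj surj by (simp_all add: surj_f_inv_f)
  have "bounded_linear R"
  proof (rule bounded_linear_intro[where K="1 / e"])
    show "R (x + y) = R x + R y" for x y by (metis RL LR L.add)
    show "R (r *\<^sub>R x) = r *\<^sub>R R x" for r x by (metis RL LR L.scaleR)
    show "norm (R x) \<le> norm x * (1 / e)" for x
      using below[of "R x"] e by (simp add: LR field_simps)
  qed
  then show ?thesis using RL LR by blast
qed

lemma op_spectrum_approx_eigenvector:
  fixes T :: "'a::{real_inner,complete_space} \<Rightarrow> 'a"
  assumes T: "bounded_linear T" and T_sym: "\<And>x y. T x \<bullet> y = x \<bullet> T y"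
    and lam: "lam \<in> op_spectrum T" and e: "e > 0"
  shows "\<exists>v. norm v = 1 \<and> norm (T v - lam *\<^sub>R v) < e"
proof (rule ccontr)
  assume no_approx: "\<not> ?thesis"
  interpret T: bounded_linear T by (fact T)
  define L where "L x = lam *\<^sub>R x - T x" for x
  have "e * norm x \<le> norm (L x)" for x
  proof (cases "x = 0")
    case False
    define v where "v = (1 / norm x) *\<^sub>R x"
    have "norm v = 1" using False unfolding v_def by simp
    then have "e \<le> norm (T v - lam *\<^sub>R v)" using no_approx by (meson not_less)
    also have "T v - lam *\<^sub>R v = - (1 / norm x) *\<^sub>R L x"
      unfolding v_def L_def by (simp add: T.scaleR algebra_simps)
    finally show ?thesis using False by (simp add: field_simps)
  qed simp
  moreover have "bounded_linear L"
    unfolding L_def by (intro bounded_linear_sub bounded_linear_scaleR_right bounded_linear_ident T)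
  moreover have "L x \<bullet> y = x \<bullet> L y" for x y
    unfolding L_def by (simp add: inner_diff_left inner_diff_right T_sym)
  ultimately obtain R where "bounded_linear R" "\<forall>x. R (L x) = x" "\<forall>x. L (R x) = x"
    using symmetric_bounded_below_invertible e by metis
  then show False using lam unfolding op_spectrum_def L_def by blast
qed

lemma op_spectrum_approx_eigenvector_nonneg:
  fixes T :: "'a::{real_inner,complete_space} \<Rightarrow> 'a" and l :: "'a \<Rightarrow> real"
  assumes "bounded_linear T" "\<And>x y. T x \<bullet> y = x \<bullet> T y"
    and "lam \<in> op_spectrum T" "e > 0" and l: "linear l"
  shows "\<exists>v. norm v = 1 \<and> norm (T v - lam *\<^sub>R v) < e \<and> 0 \<le> l v"
proof -
  obtain v where v: "norm v = 1" "norm (T v - lam *\<^sub>R v) < e"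
    using op_spectrum_approx_eigenvector[OF assms(1-4)] by blast
  have "T (- v) - lam *\<^sub>R (- v) = - (T v - lam *\<^sub>R v)"
    using linear_neg[OF bounded_linear.linear[OF assms(1)]] by simp
  then have minus_v: "norm (T (- v) - lam *\<^sub>R (- v)) < e" using v(2) by (simp only: norm_minus_cancel)
  show ?thesis
  proof (cases "0 \<le> l v")
    case False
    then show ?thesis using v(1) minus_v linear_neg[OF l, of v] by (intro exI[of _ "- v"]) auto
  qed (use v in blast)
qed

lemma adjoint_product_approx_eigenvector:
  fixes A :: "'a::{real_inner,complete_space} \<Rightarrow> 'b::{real_inner,complete_space}"
  assumes A: "bounded_linear A" and lam: "lam \<in> op_spectrum (A \<circ> adjoint A)" and e: "e > 0"
  shows "\<exists>w. norm w = 1 \<and> norm (A (adjoint A w) - lam *\<^sub>R w) < e \<and> 0 \<le> d \<bullet> adjoint A w"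
proof -
  have "bounded_linear (A \<circ> adjoint A)"
    unfolding o_def by (rule bounded_linear_compose[OF A bounded_linear_hilbert_adjoint[OF A]])
  moreover have "(A \<circ> adjoint A) x \<bullet> z = x \<bullet> (A \<circ> adjoint A) z" for x z
    by (metis hilbert_adjoint_works[OF A] inner_commute o_apply)
  moreover have "linear (\<lambda>w. d \<bullet> adjoint A w)"
    by (rule bounded_linear.linear[OF bounded_linear_compose[OF bounded_linear_inner_right
          bounded_linear_hilbert_adjoint[OF A]]])
  ultimately have "\<exists>w. norm w = 1 \<and> norm ((A \<circ> adjoint A) w - lam *\<^sub>R w) < e \<and> 0 \<le> d \<bullet> adjoint A w"
    by (rule op_spectrum_approx_eigenvector_nonneg[OF _ _ lam e])
  then show ?thesis by simp
qed

lemma tikhonov_normal_equation: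
  fixes A :: "'a::{real_inner,complete_space} \<Rightarrow> 'b::{real_inner,complete_space}"
    and xdag xstar :: 'a and y ydelta :: 'b
  assumes A: "bounded_linear A" and alpha: "alpha > 0"
  defines "u \<equiv> xhat A alpha xdag xstar y ydelta - xdag"
  shows "alpha *\<^sub>R u + adjoint A (A u) = alpha *\<^sub>R (xstar - xdag) + adjoint A (ydelta - y)"
proof -
  define F where "F x = alpha *\<^sub>R x + adjoint A (A x)" for x
  note adj = hilbert_adjoint_works[OF A]
  have "surj F"
  proof (rule surj_symmetric_coercive[where c=alpha])
    show "bounded_linear F" unfolding F_def
      by (intro bounded_linear_add bounded_linear_scaleR_right bounded_linear_ident
          bounded_linear_compose[OF bounded_linear_hilbert_adjoint[OF A] A])
    show "F x \<bullet> y = x \<bullet> F y" for x y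
      unfolding F_def by (simp add: inner_add_left inner_add_right adj inner_commute)
    show "alpha * (norm x)\<^sup>2 \<le> F x \<bullet> x" for x
    proof -
      have "adjoint A (A x) \<bullet> x = A x \<bullet> A x" by (metis adj inner_commute)
      then show ?thesis unfolding F_def by (simp add: inner_add_left power2_norm_eq_inner)
    qed
  qed (fact alpha)
  moreover have "u = inv F (alpha *\<^sub>R (xstar - xdag) + adjoint A (ydelta - y))"
    unfolding u_def xhat_def F_def by simp
  ultimately have "F u = alpha *\<^sub>R (xstar - xdag) + adjoint A (ydelta - y)"
    by (simp add: surj_f_inv_f)
  then show ?thesis by (simp add: F_def)
qed

lemma tikhonov_error_lower_bound:
  fixes A :: "'a::{real_inner,complete_space} \<Rightarrow> 'b::real_inner"
  assumes A: "bounded_linear A" and K: "\<And>x. norm (A x) \<le> norm x * K"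
    and alpha: "alpha > 0" and lam: "lam > 0"
    and w: "norm w = 1" and r: "norm (A (adjoint A w) - lam *\<^sub>R w) \<le> e"
    and e_small: "e \<le> lam / 2" and Ke_small: "K * e \<le> lam * sqrt (lam / 2) / 2"
    and sign: "0 \<le> d \<bullet> adjoint A w"
    and normal_eq: "alpha *\<^sub>R u + adjoint A (A u) = alpha *\<^sub>R d + adjoint A (lam *\<^sub>R w)"
  shows "lam / (2 * (alpha / lam + 3 / 2)\<^sup>2) \<le> (norm u)\<^sup>2"
proof -
  note adj = hilbert_adjoint_works[OF A]
  define s where "s = norm (adjoint A w)"
  define r where "r = A (adjoint A w) - lam *\<^sub>R w"
  define P where "P = alpha + 3 * lam / 2"
  have "s\<^sup>2 = lam + r \<bullet> w"
    using w power2_norm_eq_inner[of w]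
    by (simp add: s_def r_def power2_norm_eq_inner adj inner_diff_left)
  moreover have "\<bar>r \<bullet> w\<bar> \<le> e" using Cauchy_Schwarz_ineq2[of r w] w r by (simp add: r_def)
  ultimately have s2: "lam / 2 \<le> s\<^sup>2" using e_small by linarith
  then have "sqrt (lam / 2) \<le> sqrt (s\<^sup>2)" by (rule real_sqrt_le_mono)
  then have "sqrt (lam / 2) \<le> s" by (simp add: s_def)
  then have "lam * sqrt (lam / 2) / 2 \<le> lam * s / 2" using lam by simp
  then have Ke: "K * e \<le> lam * s / 2" using Ke_small by linarith
  have s_pos: "s > 0" using s2 lam by (auto simp: s_def)
  have "lam * s\<^sup>2 \<le> (alpha *\<^sub>R d + adjoint A (lam *\<^sub>R w)) \<bullet> adjoint A w"
    using alpha sign linear_scale[OF bounded_linear.linear[OF bounded_linear_hilbert_adjoint[OF A]]]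
    by (simp add: s_def power2_norm_eq_inner inner_add_left)
  also have "\<dots> = (alpha + lam) * (A u \<bullet> w) + A u \<bullet> r"
    unfolding normal_eq[symmetric] r_def
    by (simp add: inner_add_left inner_diff_right adj inner_commute algebra_simps)
  also have "\<dots> \<le> (alpha + lam) * (norm u * s) + norm u * (K * e)"
  proof -
    have "A u \<bullet> w \<le> norm u * s"
      using norm_cauchy_schwarz[of u "adjoint A w"] by (simp add: s_def adj inner_commute)
    moreover have "A u \<bullet> r \<le> norm u * (K * e)"
    proof -
      have "A u \<bullet> r \<le> norm (A u) * norm r" by (rule norm_cauchy_schwarz)
      also have "\<dots> \<le> norm (A u) * e" using r by (simp add: r_def mult_left_mono)
      also have "\<dots> \<le> (norm u * K) * e"
        using K[of u] order_trans[OF norm_ge_zero r] by (rule mult_right_mono)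
      finally show ?thesis by simp
    qed
    ultimately show ?thesis using alpha lam by (smt (verit) mult_left_mono)
  qed
  also have "\<dots> \<le> norm u * s * P"
    using mult_left_mono[OF Ke norm_ge_zero[of u]] by (simp add: P_def algebra_simps)
  finally have "lam * s \<le> norm u * P" using s_pos by (simp add: power2_eq_square)
  then have "(lam * s)\<^sup>2 \<le> (norm u * P)\<^sup>2" using lam s_pos by (intro power_mono) auto
  moreover have "lam\<^sup>2 * (lam / 2) \<le> (lam * s)\<^sup>2"
    using s2 lam by (simp add: power_mult_distrib)
  moreover have "P > 0" using alpha lam by (simp add: P_def)
  moreover have "lam / (2 * (alpha / lam + 3 / 2)\<^sup>2) = lam\<^sup>2 * (lam / 2) / P\<^sup>2"
  proof -
    have "alpha / lam + 3 / 2 = P / lam" using lam by (simp add: P_def field_simps)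
    then show ?thesis using lam \<open>P > 0\<close> by (simp only:) (simp add: field_simps power2_eq_square)
  qed
  ultimately show ?thesis by (simp add: divide_le_eq power_mult_distrib)
qed

theorem mainTheorem3:
  fixes A :: "'a::{real_inner,complete_space} \<Rightarrow> 'b::{real_inner,complete_space}"
    and xdag xstar :: 'a and y :: 'b and lam delta :: real
  assumes "bounded_linear A"
    and "lam > 0"
    and "lam \<in> op_spectrum (A \<circ> adjoint A)"
    and "delta = lam"
  shows "\<exists>ydelta. norm (ydelta - y) = delta \<and>
           (\<forall>alpha>0. norm (xhat A alpha xdag xstar y ydelta - xdag) ^ 2
                        \<ge> delta / (2 * (alpha / delta + 3 / 2) ^ 2))"
proof -
  note A = assms(1) and lam = assms(2)
  obtain K where K: "K > 0" "\<And>x. norm (A x) \<le> norm x * K"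
    using bounded_linear.pos_bounded[OF A] by blast
  define e where "e = min (lam / 2) (lam * sqrt (lam / 2) / (2 * K))"
  have e: "e > 0" "e \<le> lam / 2" "K * e \<le> lam * sqrt (lam / 2) / 2"
    using lam K(1) by (auto simp: e_def min_def field_simps)
  obtain w where w: "norm w = 1" "norm (A (adjoint A w) - lam *\<^sub>R w) < e"
      "0 \<le> (xstar - xdag) \<bullet> adjoint A w"
    using adjoint_product_approx_eigenvector[OF A assms(3) e(1)] by blast
  show ?thesis
  proof (intro exI[of _ "y + lam *\<^sub>R w"] conjI allI impI)
    show "norm (y + lam *\<^sub>R w - y) = delta" using w(1) lam assms(4) by simp
    fix alpha :: real assume "alpha > 0"
    then show "delta / (2 * (alpha / delta + 3 / 2) ^ 2)
        \<le> norm (xhat A alpha xdag xstar y (y + lam *\<^sub>R w) - xdag) ^ 2"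
      using tikhonov_error_lower_bound[OF A K(2) _ lam w(1) less_imp_le[OF w(2)] e(2,3) w(3)]
        tikhonov_normal_equation[OF A] assms(4) by simp
  qed
qed

end
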